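(* Let $A\in H_n$ and $B\in H_k$ be neither positive semidefinite nor negative semidefinite, with $\|A_+\|_\infty\geq\|B_+\|_\infty$ and $\|A_-\|_\infty\geq\|B_-\|_\infty$. Then there exists a positive unital linear map $\Phi:H_n\to H_k$ such that $\Phi(A)=B$.
   Context: $H_n$ denotes the $n\times n$ complex Hermitian matrices. A linear map $\Phi:H_n\to H_k$ is positive if it maps positive semidefinite matrices to positive semidefinite matrices and unital if $\Phi(\mathbb{1})=\mathbb{1}$. Every $A$ decomposes uniquely as $A=A_+-A_-$ with $A_\pm$ positive semidefinite and $A_+A_-=0$. $\|\cdot\|_\infty$ is the operator norm. *)

theory Defs
  imports "HOL-Analysis.Analysis"
begin

definition hermitian :: "complex^'n^'n \<Rightarrow> bool" where
  "hermitian A \<longleftrightarrow> (\<forall>i j. A $ i $ j = cnj (A $ j $ i))"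

definition psd :: "complex^'n^'n \<Rightarrow> bool" where
  "psd A \<longleftrightarrow> hermitian A \<and> (\<forall>x::complex^'n. 0 \<le> Re (\<Sum>i\<in>UNIV. cnj (x $ i) * (A *v x) $ i))"

text \<open>Positive part A_+: the unique psd P with A = P - N, N psd, P N = 0 (here N = P - A).\<close>
definition pos_part :: "complex^'n^'n \<Rightarrow> complex^'n^'n" where
  "pos_part A = (THE P. psd P \<and> psd (P - A) \<and> P ** (P - A) = 0)"

definition neg_part :: "complex^'n^'n \<Rightarrow> complex^'n^'n" where
  "neg_part A = pos_part A - A"

definition opnorm :: "complex^'n^'n \<Rightarrow> real" where
  "opnorm A = onorm (\<lambda>x::complex^'n. A *v x)"

text \<open>A real-linear map H_n -> H_k (values off H_n are irrelevant).\<close>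
definition herm_linear :: "(complex^'n^'n \<Rightarrow> complex^'k^'k) \<Rightarrow> bool" where
  "herm_linear \<Phi> \<longleftrightarrow> (\<forall>X. hermitian X \<longrightarrow> hermitian (\<Phi> X)) \<and>
     (\<forall>X Y a b. hermitian X \<longrightarrow> hermitian Y \<longrightarrow>
        \<Phi> (a *\<^sub>R X + b *\<^sub>R Y) = a *\<^sub>R \<Phi> X + b *\<^sub>R \<Phi> Y)"

definition positive_map :: "(complex^'n^'n \<Rightarrow> complex^'k^'k) \<Rightarrow> bool" where
  "positive_map \<Phi> \<longleftrightarrow> (\<forall>X. psd X \<longrightarrow> psd (\<Phi> X))"

definition unital_map :: "(complex^'n^'n \<Rightarrow> complex^'k^'k) \<Rightarrow> bool" where
  "unital_map \<Phi> \<longleftrightarrow> \<Phi> (mat 1) = mat 1"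

end

theory Submission
  imports Defs
begin

text \<open>
  Let \<open>a = \<parallel>A\<^sub>+\<parallel>\<close> and \<open>b = \<parallel>A\<^sub>-\<parallel>\<close>; both are positive because \<open>A\<close> is indefinite.
  Unit eigenvectors \<open>u\<close>, \<open>v\<close> of \<open>A\<close> for its largest and smallest eigenvalue satisfy
  \<open>\<langle>u, A u\<rangle> = a\<close> and \<open>\<langle>v, A v\<rangle> = -b\<close>, while the hypotheses on \<open>B\<close> give \<open>-b \<le> B \<le> a\<close>.
  Hence \<open>P = (B + b) / (a + b)\<close> and \<open>1 - P = (a - B) / (a + b)\<close> are positive semidefinite, and
  \<open>\<Phi> X = \<langle>u, X u\<rangle> P + \<langle>v, X v\<rangle> (1 - P)\<close> is a positive unital map with
  \<open>\<Phi> A = a P - b (1 - P) = B\<close>.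

  The spectral theorem needed for this is proved directly: a maximiser of the quadratic form on
  the unit sphere of an invariant subspace is an eigenvector, so a maximal orthonormal family of
  eigenvectors is a basis.
\<close>

definition cinner :: "complex^'n \<Rightarrow> complex^'n \<Rightarrow> complex" where
  "cinner x y = (\<Sum>i\<in>UNIV. cnj (x $ i) * y $ i)"

lemma cinner_add_right: "cinner x (y + z) = cinner x y + cinner x z"
  by (simp add: cinner_def distrib_left sum.distrib)

lemma cinner_diff_right: "cinner x (y - z) = cinner x y - cinner x z"
  by (simp add: cinner_def right_diff_distrib sum_subtractf)

lemma cinner_zero_right [simp]: "cinner x 0 = 0"
  by (simp add: cinner_def)

lemma cinner_scale_right: "cinner x (c *s y) = c * cinner x y"
  by (simp add: cinner_def sum_distrib_left algebra_simps)

lemma cinner_scale_left: "cinner (c *s x) y = cnj c * cinner x y"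
  by (simp add: cinner_def sum_distrib_left algebra_simps)

lemma scaleR_vec_eq_scale: "t *\<^sub>R (x::complex^'n) = of_real t *s x"
  by (simp add: vec_eq_iff) (simp add: scaleR_conv_of_real)

lemma cinner_scaleR_right: "cinner x (t *\<^sub>R y) = of_real t * cinner x y"
  by (simp add: scaleR_vec_eq_scale cinner_scale_right)

lemma cinner_scaleR_left: "cinner (t *\<^sub>R x) y = of_real t * cinner x y"
  by (simp add: scaleR_vec_eq_scale cinner_scale_left)

lemma cinner_sum_right: "cinner x (\<Sum>e\<in>E. f e) = (\<Sum>e\<in>E. cinner x (f e))"
  by (simp add: cinner_def sum_component sum_distrib_left sum.swap[of _ E])

lemma cinner_commute: "cinner y x = cnj (cinner x y)"
  by (simp add: cinner_def mult.commute)

lemma Re_cinner: "Re (cinner x y) = inner x y"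
  by (simp add: cinner_def inner_vec_def inner_complex_def Re_sum)

lemma cinner_self: "cinner x x = of_real (norm x ^ 2)"
proof -
  have "cinner x x = (\<Sum>i\<in>UNIV. of_real (cmod (x $ i) ^ 2))"
    unfolding cinner_def by (intro sum.cong refl) (metis complex_norm_square of_real_power mult.commute)
  also have "\<dots> = of_real (norm x ^ 2)"
    by (simp add: norm_vec_def L2_set_def sum_nonneg)
  finally show ?thesis .
qed

lemma continuous_on_cinner_right: "continuous_on S (cinner e)"
  unfolding cinner_def by (intro continuous_intros)

lemma hermitian_cinner_adjoint:
  assumes "hermitian A"
  shows "cinner x (A *v y) = cinner (A *v x) y"
proof -
  have conj: "cnj (A$j$i) = A$i$j" for i j
    using assms unfolding hermitian_def by metis
  have "cinner x (A *v y) = (\<Sum>j\<in>UNIV. \<Sum>i\<in>UNIV. cnj (x$i) * A$i$j * y$j)"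
    by (subst sum.swap) (simp add: cinner_def matrix_vector_mult_def sum_distrib_left mult.assoc)
  also have "\<dots> = (\<Sum>j\<in>UNIV. \<Sum>i\<in>UNIV. cnj (A$j$i) * cnj (x$i) * y$j)"
    by (simp only: conj mult.commute mult.left_commute)
  also have "\<dots> = cinner (A *v x) y"
    by (simp add: cinner_def matrix_vector_mult_def sum_distrib_right cnj_sum)
  finally show ?thesis .
qed

lemma hermitian_inner_adjoint: "hermitian A \<Longrightarrow> inner x (A *v y) = inner (A *v x) y"
  by (metis Re_cinner hermitian_cinner_adjoint)

lemma psd_iff_inner: "psd M \<longleftrightarrow> hermitian M \<and> (\<forall>x. 0 \<le> inner x (M *v x))"
  by (simp add: psd_def flip: Re_cinner) (simp add: cinner_def)

text \<open>Unlike \<open>hermitian_def\<close>, this form is a terminating simp rule.\<close>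
lemma hermitian_iff_cnj: "hermitian X \<longleftrightarrow> (\<forall>i j. cnj (X $ j $ i) = X $ i $ j)"
  unfolding hermitian_def by (metis complex_cnj_cnj)

lemma hermitian_add: "hermitian X \<Longrightarrow> hermitian Y \<Longrightarrow> hermitian (X + Y)"
  by (simp add: hermitian_iff_cnj)

lemma hermitian_uminus: "hermitian X \<Longrightarrow> hermitian (- X)"
  by (simp add: hermitian_iff_cnj)

lemma hermitian_scaleR: "hermitian X \<Longrightarrow> hermitian (c *\<^sub>R X)"
  by (simp add: hermitian_iff_cnj)

lemma hermitian_mat_1: "hermitian (mat 1 :: complex^'n^'n)"
  by (simp add: hermitian_def mat_def)

lemma scaleR_matrix_vector_mult: "(c *\<^sub>R M) *v x = c *\<^sub>R (M *v (x::complex^'n))"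
  by (simp add: vec_eq_iff matrix_vector_mult_def scaleR_sum_right)

lemma uminus_matrix_vector_mult: "(- M) *v x = - (M *v (x::complex^'n))"
  by (simp add: vec_eq_iff matrix_vector_mult_def sum_negf)

lemma matrix_vector_mult_scale: "M *v (c *s x) = c *s (M *v (x::complex^'n))"
  by (simp add: vec_eq_iff matrix_vector_mult_def sum_distrib_left algebra_simps)

lemma psd_add: "psd X \<Longrightarrow> psd Y \<Longrightarrow> psd (X + Y)"
  by (simp add: psd_iff_inner hermitian_add matrix_vector_mult_add_rdistrib inner_add_right)

lemma psd_scaleR: "psd X \<Longrightarrow> 0 \<le> c \<Longrightarrow> psd (c *\<^sub>R X)"
  by (simp add: psd_iff_inner hermitian_scaleR scaleR_matrix_vector_mult)

lemma selfadjoint_psd_kernel: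
  fixes R :: "'a::real_inner \<Rightarrow> 'a"
  assumes "linear R" and adjoint: "\<And>x y. inner x (R y) = inner (R x) y"
    and "subspace S" and "\<And>x. x \<in> S \<Longrightarrow> R x \<in> S"
    and nonneg: "\<And>w. w \<in> S \<Longrightarrow> 0 \<le> inner w (R w)"
    and "x \<in> S" and "inner x (R x) = 0"
  shows "R x = 0"
proof -
  define r where "r = R x"
  define c where "c = inner r (R r)"
  have quadratic: "0 \<le> s\<^sup>2 * c - 2 * (s * inner r r)" for s
  proof -
    have "x - s *\<^sub>R r \<in> S"
      using assms r_def by (simp add: subspace_diff subspace_scale)
    moreover have "R (x - s *\<^sub>R r) = r - s *\<^sub>R R r"
      by (simp add: r_def linear_diff[OF \<open>linear R\<close>] linear_scale[OF \<open>linear R\<close>])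
    ultimately have "0 \<le> inner (x - s *\<^sub>R r) (r - s *\<^sub>R R r)"
      using nonneg by metis
    also have "\<dots> = inner x r - s * inner x (R r) - s * inner r r + s\<^sup>2 * c"
      by (simp add: c_def inner_diff_left inner_diff_right power2_eq_square algebra_simps)
    also have "\<dots> = s\<^sup>2 * c - 2 * (s * inner r r)"
      using \<open>inner x (R x) = 0\<close> adjoint[of x r] by (simp add: r_def)
    finally show ?thesis .
  qed
  have "inner r r \<le> 0"
  proof (rule ccontr)
    assume "\<not> inner r r \<le> 0"
    define s where "s = inner r r / (\<bar>c\<bar> + 1)"
    have "s > 0"
      using \<open>\<not> inner r r \<le> 0\<close> unfolding s_def by (intro divide_pos_pos) auto
    then have "s * inner r r > 0"
      using \<open>\<not> inner r r \<le> 0\<close> by (metis mult_pos_pos not_le)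
    have "s\<^sup>2 * c \<le> s\<^sup>2 * (\<bar>c\<bar> + 1)"
      by (intro mult_left_mono) auto
    also have "\<dots> = s * inner r r"
      by (simp add: s_def power2_eq_square add_pos_nonneg)
    finally show False
      using quadratic[of s] \<open>s * inner r r > 0\<close> by linarith
  qed
  then show ?thesis
    by (metis inner_gt_zero_iff not_le r_def)
qed

lemma selfadjoint_maximiser_eigenvector:
  fixes T :: "'a::real_inner \<Rightarrow> 'a"
  assumes "linear T" and adjoint: "\<And>x y. inner x (T y) = inner (T x) y"
    and "subspace S" and invariant: "\<And>w. w \<in> S \<Longrightarrow> T w \<in> S"
    and "x \<in> S" and "norm x = 1"
    and x_max: "\<And>w. w \<in> S \<Longrightarrow> norm w = 1 \<Longrightarrow> inner w (T w) \<le> inner x (T x)"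
  shows "T x = inner x (T x) *\<^sub>R x"
proof -
  define R where "R w = inner x (T x) *\<^sub>R w - T w" for w
  have "linear R"
    unfolding R_def by (intro linear_compose_sub linear_scaleR \<open>linear T\<close>)
  moreover have "R w \<in> S" if "w \<in> S" for w
    unfolding R_def using \<open>subspace S\<close> that invariant by (simp add: subspace_diff subspace_scale)
  moreover have "0 \<le> inner w (R w)" if "w \<in> S" for w
  proof (cases "w = 0")
    case False
    have "inner ((1 / norm w) *\<^sub>R w) (T ((1 / norm w) *\<^sub>R w)) \<le> inner x (T x)"
      using False that \<open>subspace S\<close> by (intro x_max) (simp_all add: subspace_scale)
    then have "inner w (T w) / (norm w)\<^sup>2 \<le> inner x (T x)"
      by (simp add: linear_scale[OF \<open>linear T\<close>] power2_eq_square)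
    then show ?thesis
      using False by (simp add: R_def inner_diff_right power2_norm_eq_inner field_simps)
  qed simp
  moreover have "inner x (R x) = 0"
    using \<open>norm x = 1\<close> by (simp add: R_def inner_diff_right power2_norm_eq_inner[symmetric])
  ultimately have "R x = 0"
    using selfadjoint_psd_kernel[of R S x] \<open>subspace S\<close> \<open>x \<in> S\<close> adjoint
    by (auto simp: R_def inner_diff_left inner_diff_right)
  then show ?thesis
    by (simp add: R_def)
qed

lemma hermitian_eigenvector_orthogonal:
  fixes A :: "complex^'n^'n"
  assumes herm: "hermitian A" and eig: "\<And>e. e \<in> E \<Longrightarrow> \<exists>\<mu>::real. A *v e = \<mu> *\<^sub>R e"
    and "y \<noteq> 0" and "\<forall>e\<in>E. cinner e y = 0"
  obtains z and \<mu> :: real where "norm z = 1" "A *v z = \<mu> *\<^sub>R z" "\<forall>e\<in>E. cinner e z = 0"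
proof -
  define S where "S = {x. \<forall>e\<in>E. cinner e x = 0}"
  define K where "K = S \<inter> sphere 0 1"
  have "subspace S"
    by (auto simp: subspace_def S_def cinner_add_right cinner_scaleR_right)
  have "S = (\<Inter>e\<in>E. {x. cinner e x = 0})"
    by (auto simp: S_def)
  then have "closed S"
    by (auto intro!: closed_INT closed_Collect_eq continuous_on_cinner_right continuous_intros)
  then have "compact K"
    by (simp add: K_def closed_Int_compact)
  have "(1 / norm y) *\<^sub>R y \<in> K"
    using assms unfolding K_def S_def by (simp add: cinner_scaleR_right)
  then have "K \<noteq> {}"
    by auto
  have "continuous_on K (\<lambda>x. inner x (A *v x))"
    by (intro continuous_intros linear_continuous_on matrix_vector_mul_bounded_linear)
  then obtain x where "x \<in> K" and x_max: "\<And>w. w \<in> K \<Longrightarrow> inner w (A *v w) \<le> inner x (A *v x)"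
    using continuous_attains_sup[OF \<open>compact K\<close> \<open>K \<noteq> {}\<close>] by blast
  have "A *v w \<in> S" if "w \<in> S" for w
  proof -
    have "cinner e (A *v w) = 0" if "e \<in> E" for e
      using eig[OF that] \<open>w \<in> S\<close> that
      by (auto simp: S_def hermitian_cinner_adjoint[OF herm] cinner_scaleR_left)
    then show ?thesis
      by (simp add: S_def)
  qed
  then have "A *v x = inner x (A *v x) *\<^sub>R x"
    using \<open>x \<in> K\<close> x_max \<open>subspace S\<close> hermitian_inner_adjoint[OF herm]
    by (intro selfadjoint_maximiser_eigenvector) (auto simp: K_def)
  then show ?thesis
    using that \<open>x \<in> K\<close> by (auto simp: K_def S_def)
qed

definition orthonormal_set :: "(complex^'n) set \<Rightarrow> bool" where
  "orthonormal_set E \<longleftrightarrow>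
     finite E \<and> (\<forall>e\<in>E. \<forall>e'\<in>E. cinner e e' = (if e = e' then 1 else 0))"

definition orthonormal_basis :: "(complex^'n) set \<Rightarrow> bool" where
  "orthonormal_basis E \<longleftrightarrow> orthonormal_set E \<and> (\<forall>x. (\<Sum>e\<in>E. cinner e x *s e) = x)"

lemma norm_orthonormal_set:
  assumes "orthonormal_set E" and "e \<in> E"
  shows "norm e = 1"
proof -
  have "cinner e e = 1"
    using assms by (simp add: orthonormal_set_def)
  then have "(norm e)\<^sup>2 = 1"
    by (metis cinner_self of_real_eq_1_iff)
  then show ?thesis
    using norm_ge_zero[of e] by (auto simp: power2_eq_1_iff)
qed

lemma cinner_orthonormal_sum:
  assumes "orthonormal_set E" and "e \<in> E"
  shows "cinner e (\<Sum>e'\<in>E. c e' *s e') = c e"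
proof -
  have "cinner e (\<Sum>e'\<in>E. c e' *s e') = (\<Sum>e'\<in>E. c e' * cinner e e')"
    by (simp add: cinner_sum_right cinner_scale_right)
  also have "\<dots> = (\<Sum>e'\<in>E. if e = e' then c e' else 0)"
    using assms unfolding orthonormal_set_def by (intro sum.cong) auto
  also have "\<dots> = c e"
    using assms by (simp add: orthonormal_set_def)
  finally show ?thesis .
qed

text \<open>An orthonormal set \<open>E\<close> yields the real orthogonal set \<open>E \<union> \<i>E\<close> of size \<open>2 |E|\<close>
  in the real space \<open>complex^'n\<close> of dimension \<open>2 n\<close>.\<close>
lemma card_orthonormal_set_le:
  fixes E :: "(complex^'n) set"
  assumes "orthonormal_set E"
  shows "card E \<le> CARD('n)"
proof -
  define J where "J x = \<i> *s x" for x :: "complex^'n"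
  define T where "T = E \<union> J ` E"
  have "finite E" and ortho: "\<And>e e'. e \<in> E \<Longrightarrow> e' \<in> E \<Longrightarrow> cinner e e' = (if e = e' then 1 else 0)"
    using assms by (auto simp: orthonormal_set_def)
  have "pairwise orthogonal T"
    unfolding pairwise_def orthogonal_def T_def
    by (auto simp: Re_cinner[symmetric] J_def cinner_scale_left cinner_scale_right ortho)
  moreover have "0 \<notin> T"
    using norm_orthonormal_set[OF assms] by (force simp: T_def J_def)
  ultimately have "independent T"
    by (rule pairwise_orthogonal_independent)
  then have "card T \<le> 2 * CARD('n)"
    using independent_bound by fastforce
  moreover have "e \<noteq> J e'" if "e \<in> E" and "e' \<in> E" for e e'
  proof
    assume "e = J e'"
    then have "cinner e' e = \<i> * cinner e' e'"
      by (simp add: J_def cinner_scale_right)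
    then show False
      using ortho[OF that(2) that(1)] ortho[OF that(2) that(2)] by (auto split: if_splits)
  qed
  then have "E \<inter> J ` E = {}"
    by blast
  moreover have "inj_on J E"
    by (rule inj_onI) (simp add: J_def)
  ultimately show ?thesis
    using \<open>finite E\<close> by (simp add: T_def card_Un_disjoint card_image)
qed

lemma hermitian_orthonormal_eigenbasis:
  fixes A :: "complex^'n^'n"
  assumes herm: "hermitian A"
  obtains E and \<mu> :: "complex^'n \<Rightarrow> real"
  where "orthonormal_basis E" and "\<And>e. e \<in> E \<Longrightarrow> A *v e = \<mu> e *\<^sub>R e"
proof -
  define eigensets where
    "eigensets = {E. orthonormal_set E \<and> (\<forall>e\<in>E. \<exists>\<mu>::real. A *v e = \<mu> *\<^sub>R e)}"
  have "{} \<in> eigensets"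
    by (simp add: eigensets_def orthonormal_set_def)
  moreover have "\<forall>E. E \<in> eigensets \<longrightarrow> card E < Suc CARD('n)"
    using card_orthonormal_set_le by (fastforce simp: eigensets_def)
  ultimately obtain E where "E \<in> eigensets" and E_max: "\<And>E'. E' \<in> eigensets \<Longrightarrow> card E' \<le> card E"
    using ex_has_greatest_nat[of "\<lambda>E. E \<in> eigensets" "{}" card] by blast
  then have "orthonormal_set E" and eig: "\<forall>e\<in>E. \<exists>\<mu>::real. A *v e = \<mu> *\<^sub>R e"
    by (auto simp: eigensets_def)
  have "(\<Sum>e\<in>E. cinner e x *s e) = x" for x
  proof (rule ccontr)
    define y where "y = x - (\<Sum>e\<in>E. cinner e x *s e)"
    assume "(\<Sum>e\<in>E. cinner e x *s e) \<noteq> x"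
    then have "y \<noteq> 0"
      by (simp add: y_def)
    moreover have "\<forall>e\<in>E. cinner e y = 0"
      by (simp add: y_def cinner_diff_right cinner_orthonormal_sum[OF \<open>orthonormal_set E\<close>])
    ultimately obtain z and \<mu> :: real
      where "norm z = 1" "A *v z = \<mu> *\<^sub>R z" and z_orth: "\<forall>e\<in>E. cinner e z = 0"
      using hermitian_eigenvector_orthogonal[OF herm] eig by metis
    then have "z \<notin> E"
      using \<open>orthonormal_set E\<close> by (auto simp: orthonormal_set_def)
    have "insert z E \<in> eigensets"
      using \<open>orthonormal_set E\<close> eig \<open>norm z = 1\<close> \<open>A *v z = \<mu> *\<^sub>R z\<close> z_orth
      by (auto simp: eigensets_def orthonormal_set_def cinner_self cinner_commute[of z])
    then show False
      using E_max[of "insert z E"] \<open>z \<notin> E\<close> \<open>orthonormal_set E\<close>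
      by (simp add: orthonormal_set_def)
  qed
  then have "orthonormal_basis E"
    using \<open>orthonormal_set E\<close> by (simp add: orthonormal_basis_def)
  moreover obtain \<mu> where "\<forall>e\<in>E. A *v e = \<mu> e *\<^sub>R e"
    using bchoice[OF eig] by blast
  ultimately show ?thesis
    using that by blast
qed

definition spectral_sum :: "(complex^'n) set \<Rightarrow> (complex^'n \<Rightarrow> real) \<Rightarrow> complex^'n^'n" where
  "spectral_sum E h = (\<chi> i j. \<Sum>e\<in>E. of_real (h e) * e $ i * cnj (e $ j))"

lemma spectral_sum_mult_vec: "spectral_sum E h *v x = (\<Sum>e\<in>E. h e *\<^sub>R (cinner e x *s e))"
  by (simp add: vec_eq_iff spectral_sum_def matrix_vector_mult_def sum_component cinner_def
      sum_distrib_left sum_distrib_right sum.swap[of _ E] scaleR_vec_eq_scale algebra_simps)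

lemma hermitian_spectral_sum: "hermitian (spectral_sum E h)"
  unfolding hermitian_def spectral_sum_def by (simp add: cnj_sum algebra_simps)

lemma inner_spectral_sum: "inner x (spectral_sum E h *v x) = (\<Sum>e\<in>E. h e * (cmod (cinner e x))\<^sup>2)"
proof -
  have "cinner x (spectral_sum E h *v x) = (\<Sum>e\<in>E. of_real (h e) * (cinner e x * cnj (cinner e x)))"
    by (simp add: spectral_sum_mult_vec cinner_sum_right cinner_scaleR_right cinner_scale_right
        cinner_commute[of x] mult.assoc)
  then show ?thesis
    by (simp flip: Re_cinner complex_norm_square)
qed

lemma psd_spectral_sum: "(\<And>e. e \<in> E \<Longrightarrow> 0 \<le> h e) \<Longrightarrow> psd (spectral_sum E h)"
  by (simp add: psd_iff_inner hermitian_spectral_sum inner_spectral_sum sum_nonneg)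

lemma spectral_sum_diff: "spectral_sum E h - spectral_sum E k = spectral_sum E (\<lambda>e. h e - k e)"
  by (simp add: vec_eq_iff spectral_sum_def sum_subtractf[symmetric] algebra_simps)

lemma spectral_sum_uminus: "- spectral_sum E h = spectral_sum E (\<lambda>e. - h e)"
  by (simp add: vec_eq_iff spectral_sum_def sum_negf[symmetric])

lemma spectral_sum_zero: "spectral_sum E (\<lambda>e. 0) = 0"
  by (simp add: vec_eq_iff spectral_sum_def)

lemma spectral_sum_eigenvector:
  assumes "orthonormal_set E" and "e \<in> E"
  shows "spectral_sum E h *v e = h e *\<^sub>R e"
proof -
  have "spectral_sum E h *v e = (\<Sum>e'\<in>E. if e' = e then h e *\<^sub>R e else 0)"
    using assms unfolding spectral_sum_mult_vec orthonormal_set_def by (intro sum.cong) auto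
  then show ?thesis
    using assms by (simp add: orthonormal_set_def)
qed

lemma matrix_eq_on_orthonormal_basis:
  fixes M N :: "complex^'n^'n"
  assumes "orthonormal_basis E" and "\<And>e. e \<in> E \<Longrightarrow> M *v e = N *v e"
  shows "M = N"
proof -
  have expand: "L *v x = (\<Sum>e\<in>E. cinner e x *s (L *v e))" for L :: "complex^'n^'n" and x
  proof -
    have "L *v x = L *v (\<Sum>e\<in>E. cinner e x *s e)"
      using assms(1) by (simp add: orthonormal_basis_def)
    then show ?thesis
      by (simp add: linear_sum[OF matrix_vector_mul_linear] matrix_vector_mult_scale)
  qed
  have "M *v x = N *v x" for x
  proof -
    have "M *v x = (\<Sum>e\<in>E. cinner e x *s (M *v e))"
      by (rule expand)
    also have "\<dots> = (\<Sum>e\<in>E. cinner e x *s (N *v e))"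
      using assms(2) by (intro sum.cong) auto
    also have "\<dots> = N *v x"
      by (rule expand[symmetric])
    finally show ?thesis .
  qed
  then show ?thesis
    by (simp add: matrix_eq)
qed

lemma spectral_sum_mult:
  assumes "orthonormal_basis E"
  shows "spectral_sum E h ** spectral_sum E k = spectral_sum E (\<lambda>e. h e * k e)"
proof (rule matrix_eq_on_orthonormal_basis[OF assms])
  fix e
  assume "e \<in> E"
  then have eig: "spectral_sum E g *v e = g e *\<^sub>R e" for g
    using assms by (simp add: orthonormal_basis_def spectral_sum_eigenvector)
  have "(spectral_sum E h ** spectral_sum E k) *v e = spectral_sum E h *v (k e *\<^sub>R e)"
    by (simp only: eig matrix_vector_mul_assoc[symmetric])
  also have "\<dots> = spectral_sum E (\<lambda>e. h e * k e) *v e"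
    by (simp only: eig linear_scale[OF matrix_vector_mul_linear] scaleR_scaleR mult.commute)
  finally show "(spectral_sum E h ** spectral_sum E k) *v e = spectral_sum E (\<lambda>e. h e * k e) *v e" .
qed

lemma hermitian_spectral_decomposition:
  fixes A :: "complex^'n^'n"
  assumes "hermitian A"
  obtains E \<mu> where "orthonormal_basis E" and "A = spectral_sum E \<mu>"
proof -
  obtain E \<mu> where "orthonormal_basis E" and "\<And>e. e \<in> E \<Longrightarrow> A *v e = \<mu> e *\<^sub>R e"
    using hermitian_orthonormal_eigenbasis[OF assms] by blast
  then have "A = spectral_sum E \<mu>"
    by (intro matrix_eq_on_orthonormal_basis) (auto simp: orthonormal_basis_def spectral_sum_eigenvector)
  with \<open>orthonormal_basis E\<close> show ?thesis
    using that by blast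
qed

lemma norm_square_orthonormal_basis:
  assumes "orthonormal_basis E"
  shows "(norm x)\<^sup>2 = (\<Sum>e\<in>E. (cmod (cinner e x))\<^sup>2)"
proof -
  have "of_real ((norm x)\<^sup>2) = cinner x (\<Sum>e\<in>E. cinner e x *s e)"
    using assms by (simp add: orthonormal_basis_def cinner_self)
  also have "\<dots> = (\<Sum>e\<in>E. cinner e x * cnj (cinner e x))"
    by (simp add: cinner_sum_right cinner_scale_right cinner_commute[of x])
  also have "\<dots> = of_real (\<Sum>e\<in>E. (cmod (cinner e x))\<^sup>2)"
    by (simp only: complex_norm_square of_real_sum)
  finally show ?thesis
    using of_real_eq_iff by blast
qed

lemma norm_spectral_sum_mult_vec_le:
  assumes "orthonormal_basis E" and "\<And>e. e \<in> E \<Longrightarrow> \<bar>h e\<bar> \<le> M" and "0 \<le> M"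
  shows "norm (spectral_sum E h *v x) \<le> M * norm x"
proof -
  have "cinner e (spectral_sum E h *v x) = of_real (h e) * cinner e x" if "e \<in> E" for e
    using assms(1) that
    by (simp add: hermitian_cinner_adjoint[OF hermitian_spectral_sum] orthonormal_basis_def
        spectral_sum_eigenvector cinner_scaleR_left)
  then have "(norm (spectral_sum E h *v x))\<^sup>2 = (\<Sum>e\<in>E. (h e)\<^sup>2 * (cmod (cinner e x))\<^sup>2)"
    by (simp add: norm_square_orthonormal_basis[OF assms(1)] norm_mult power_mult_distrib)
  also have "\<dots> \<le> (\<Sum>e\<in>E. M\<^sup>2 * (cmod (cinner e x))\<^sup>2)"
    using assms(2,3) by (intro sum_mono mult_right_mono) (simp_all add: power2_le_iff_abs_le)
  also have "\<dots> = (M * norm x)\<^sup>2"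
    by (simp add: norm_square_orthonormal_basis[OF assms(1)] sum_distrib_left power_mult_distrib)
  finally show ?thesis
    by (rule power2_le_imp_le) (use assms(3) in simp)
qed

lemma opnorm_spectral_sum_le:
  assumes "orthonormal_basis E" and "\<And>e. e \<in> E \<Longrightarrow> \<bar>h e\<bar> \<le> M" and "0 \<le> M"
  shows "opnorm (spectral_sum E h) \<le> M"
  unfolding opnorm_def using norm_spectral_sum_mult_vec_le[OF assms] by (rule onorm_le)

lemma inner_le_opnorm: "inner x (M *v x) \<le> opnorm M * (norm x)\<^sup>2"
proof -
  have "inner x (M *v x) \<le> norm x * norm (M *v x)"
    by (rule norm_cauchy_schwarz)
  also have "\<dots> \<le> norm x * (opnorm M * norm x)"
    unfolding opnorm_def by (intro mult_left_mono onorm matrix_vector_mul_bounded_linear) simp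
  finally show ?thesis
    by (simp add: power2_eq_square mult_ac)
qed

lemma psd_decomposition_eigenvector:
  assumes "psd P" and "psd (P - A)" and "P ** (P - A) = 0" and "A *v e = \<mu> *\<^sub>R e"
  shows "P *v e = max \<mu> 0 *\<^sub>R e"
proof -
  define v where "v = P *v e"
  define w where "w = (P - A) *v e"
  have diff: "v - w = \<mu> *\<^sub>R e"
    using assms(4) by (simp add: v_def w_def matrix_vector_mult_diff_rdistrib)
  have "inner v w = 0"
    using hermitian_inner_adjoint[of P e w] assms(1,3)
    by (simp add: psd_iff_inner v_def w_def matrix_vector_mul_assoc)
  have "0 \<le> inner e v" and "0 \<le> inner e w"
    using assms(1,2) by (simp_all add: psd_iff_inner v_def w_def)
  have "(norm v)\<^sup>2 = inner (v - w) v"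
    using \<open>inner v w = 0\<close> by (simp add: power2_norm_eq_inner inner_diff_left inner_commute[of w])
  also have "\<dots> = \<mu> * inner e v"
    by (simp add: diff)
  finally have norm_v: "(norm v)\<^sup>2 = \<mu> * inner e v" .
  have "(norm w)\<^sup>2 = - inner (v - w) w"
    using \<open>inner v w = 0\<close> by (simp add: power2_norm_eq_inner inner_diff_left)
  also have "\<dots> = - \<mu> * inner e w"
    by (simp add: diff)
  finally have norm_w: "(norm w)\<^sup>2 = - \<mu> * inner e w" .
  show ?thesis
  proof (cases "0 \<le> \<mu>")
    case True
    then have "(norm w)\<^sup>2 \<le> 0"
      using norm_w \<open>0 \<le> inner e w\<close> by (simp add: mult_nonneg_nonneg)
    then have "w = 0"
      by simp
    then show ?thesis
      using True diff by (simp add: v_def)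
  next
    case False
    then have "(norm v)\<^sup>2 \<le> 0"
      using norm_v \<open>0 \<le> inner e v\<close> by (simp add: mult_nonpos_nonneg)
    then have "v = 0"
      by simp
    then show ?thesis
      using False by (simp add: v_def)
  qed
qed

lemma pos_part_spectral_sum:
  assumes "orthonormal_basis E"
  shows "pos_part (spectral_sum E \<mu>) = spectral_sum E (\<lambda>e. max (\<mu> e) 0)"
proof -
  define A where "A = spectral_sum E \<mu>"
  define P where "P = spectral_sum E (\<lambda>e. max (\<mu> e) 0)"
  have PA: "P - A = spectral_sum E (\<lambda>e. max (\<mu> e) 0 - \<mu> e)"
    by (simp add: P_def A_def spectral_sum_diff)
  have "(\<lambda>e. max (\<mu> e) 0 * (max (\<mu> e) 0 - \<mu> e)) = (\<lambda>e. 0)"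
    by (auto simp: max_def)
  then have "psd P \<and> psd (P - A) \<and> P ** (P - A) = 0"
    unfolding PA by (simp add: P_def psd_spectral_sum spectral_sum_mult[OF assms] spectral_sum_zero)
  moreover have "P' = P" if "psd P' \<and> psd (P' - A) \<and> P' ** (P' - A) = 0" for P'
  proof (rule matrix_eq_on_orthonormal_basis[OF assms])
    fix e
    assume "e \<in> E"
    then have "A *v e = \<mu> e *\<^sub>R e" and "P *v e = max (\<mu> e) 0 *\<^sub>R e"
      using assms by (simp_all add: A_def P_def orthonormal_basis_def spectral_sum_eigenvector)
    then show "P' *v e = P *v e"
      using psd_decomposition_eigenvector that by metis
  qed
  ultimately show ?thesis
    unfolding pos_part_def A_def[symmetric] P_def[symmetric] by (rule the_equality)
qed

lemma neg_part_spectral_sum: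
  assumes "orthonormal_basis E"
  shows "neg_part (spectral_sum E \<mu>) = spectral_sum E (\<lambda>e. max (- \<mu> e) 0)"
proof -
  have "neg_part (spectral_sum E \<mu>) = spectral_sum E (\<lambda>e. max (\<mu> e) 0 - \<mu> e)"
    by (simp add: neg_part_def pos_part_spectral_sum[OF assms] spectral_sum_diff)
  also have "(\<lambda>e. max (\<mu> e) 0 - \<mu> e) = (\<lambda>e. max (- \<mu> e) 0)"
    by (auto simp: max_def)
  finally show ?thesis .
qed

lemma psd_neg_part: "hermitian A \<Longrightarrow> psd (neg_part A)"
  by (metis hermitian_spectral_decomposition neg_part_spectral_sum psd_spectral_sum max.cobounded2)

lemma neg_part_eq_pos_part_uminus:
  assumes "hermitian A"
  shows "neg_part A = pos_part (- A)"
proof -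
  obtain E \<mu> where "orthonormal_basis E" and "A = spectral_sum E \<mu>"
    using hermitian_spectral_decomposition[OF assms] by blast
  then show ?thesis
    by (simp add: neg_part_spectral_sum pos_part_spectral_sum spectral_sum_uminus)
qed

lemma inner_le_opnorm_pos_part:
  assumes "hermitian A"
  shows "inner x (A *v x) \<le> opnorm (pos_part A) * (norm x)\<^sup>2"
proof -
  have "inner x (A *v x) = inner x (pos_part A *v x) - inner x (neg_part A *v x)"
    by (simp add: neg_part_def matrix_vector_mult_diff_rdistrib inner_diff_right)
  also have "\<dots> \<le> inner x (pos_part A *v x)"
    using psd_neg_part[OF assms] by (simp add: psd_iff_inner)
  also have "\<dots> \<le> opnorm (pos_part A) * (norm x)\<^sup>2"
    by (rule inner_le_opnorm)
  finally show ?thesis .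
qed

lemma opnorm_neg_part_le_inner:
  assumes "hermitian A"
  shows "- (opnorm (neg_part A) * (norm x)\<^sup>2) \<le> inner x (A *v x)"
  using inner_le_opnorm_pos_part[OF hermitian_uminus[OF assms], of x]
  by (simp add: neg_part_eq_pos_part_uminus[OF assms] uminus_matrix_vector_mult)

lemma pos_part_opnorm_attained:
  assumes "hermitian A" and "\<not> psd (- A)"
  obtains u where "norm u = 1" and "inner u (A *v u) = opnorm (pos_part A)"
    and "0 < opnorm (pos_part A)"
proof -
  obtain E \<mu> where basis: "orthonormal_basis E" and A: "A = spectral_sum E \<mu>"
    using hermitian_spectral_decomposition[OF assms(1)] by blast
  then have "finite E" and "orthonormal_set E"
    by (simp_all add: orthonormal_basis_def orthonormal_set_def)
  have "\<exists>e\<in>E. 0 < \<mu> e"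
  proof (rule ccontr)
    assume "\<not> (\<exists>e\<in>E. 0 < \<mu> e)"
    then have "psd (- A)"
      by (auto simp: A spectral_sum_uminus intro!: psd_spectral_sum)
    with assms(2) show False ..
  qed
  then have "0 < Max (\<mu> ` E)"
    using \<open>finite E\<close> by (meson Max_ge finite_imageI imageI less_le_trans)
  obtain u where "u \<in> E" and u_max: "\<mu> u = Max (\<mu> ` E)"
    using Max_in[of "\<mu> ` E"] \<open>finite E\<close> \<open>\<exists>e\<in>E. 0 < \<mu> e\<close> by fastforce
  have "norm u = 1"
    using \<open>orthonormal_set E\<close> \<open>u \<in> E\<close> by (rule norm_orthonormal_set)
  have "inner u (A *v u) = \<mu> u"
    using \<open>orthonormal_set E\<close> \<open>u \<in> E\<close> \<open>norm u = 1\<close>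
    by (simp add: A spectral_sum_eigenvector power2_norm_eq_inner[symmetric])
  moreover have "opnorm (pos_part A) \<le> \<mu> u"
    unfolding A pos_part_spectral_sum[OF basis]
    using \<open>finite E\<close> \<open>0 < Max (\<mu> ` E)\<close> u_max by (intro opnorm_spectral_sum_le[OF basis]) auto
  moreover have "inner u (A *v u) \<le> opnorm (pos_part A)"
    using inner_le_opnorm_pos_part[OF assms(1), of u] \<open>norm u = 1\<close> by simp
  ultimately show ?thesis
    using that \<open>norm u = 1\<close> \<open>0 < Max (\<mu> ` E)\<close> u_max by auto
qed

lemma neg_part_opnorm_attained:
  assumes "hermitian A" and "\<not> psd A"
  obtains v where "norm v = 1" and "inner v (A *v v) = - opnorm (neg_part A)"
    and "0 < opnorm (neg_part A)"
proof -
  have "hermitian (- A)" and "\<not> psd (- (- A))"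
    using assms by (simp_all add: hermitian_uminus)
  then obtain v where "norm v = 1" and "inner v ((- A) *v v) = opnorm (pos_part (- A))"
    and "0 < opnorm (pos_part (- A))"
    by (rule pos_part_opnorm_attained)
  then show ?thesis
    using that by (simp add: neg_part_eq_pos_part_uminus[OF assms(1)] uminus_matrix_vector_mult)
qed

definition measure_prepare ::
    "complex^'n \<Rightarrow> complex^'n \<Rightarrow> complex^'k^'k \<Rightarrow> complex^'n^'n \<Rightarrow> complex^'k^'k" where
  "measure_prepare u v P X = inner u (X *v u) *\<^sub>R P + inner v (X *v v) *\<^sub>R (mat 1 - P)"

lemma herm_linear_measure_prepare:
  assumes "hermitian P"
  shows "herm_linear (measure_prepare u v P)"
proof -
  have "hermitian (mat 1 - P)"
    using assms by (simp add: hermitian_iff_cnj mat_def)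
  then show ?thesis
    using assms
    by (auto simp: herm_linear_def measure_prepare_def hermitian_add hermitian_scaleR
        matrix_vector_mult_add_rdistrib scaleR_matrix_vector_mult inner_add_right
        scaleR_add_left scaleR_add_right)
qed

lemma positive_map_measure_prepare:
  fixes u v :: "complex^'n"
  assumes "psd P" and "psd (mat 1 - P)"
  shows "positive_map (measure_prepare u v P)"
  unfolding positive_map_def measure_prepare_def
proof (intro allI impI psd_add psd_scaleR assms)
  fix X :: "complex^'n^'n"
  assume "psd X"
  then show "0 \<le> inner u (X *v u)" and "0 \<le> inner v (X *v v)"
    by (simp_all add: psd_iff_inner)
qed

lemma unital_map_measure_prepare:
  assumes "norm u = 1" and "norm v = 1"
  shows "unital_map (measure_prepare u v P)"
  using assms by (simp add: unital_map_def measure_prepare_def power2_norm_eq_inner[symmetric])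

lemma psd_add_scaleR_mat_1:
  assumes "hermitian B" and "\<And>x. - (b * (norm x)\<^sup>2) \<le> inner x (B *v x)"
  shows "psd (B + b *\<^sub>R mat 1)"
  using assms
  by (simp add: psd_iff_inner hermitian_add hermitian_scaleR hermitian_mat_1
      matrix_vector_mult_add_rdistrib scaleR_matrix_vector_mult inner_add_right
      power2_norm_eq_inner add.commute[of "- _"] flip: diff_le_eq)

lemma positive_unital_map_exists:
  fixes A :: "complex^'n^'n" and B :: "complex^'k^'k"
  assumes "hermitian B" and "0 < a" and "0 < b"
    and "\<And>x. inner x (B *v x) \<le> a * (norm x)\<^sup>2" and "\<And>x. - (b * (norm x)\<^sup>2) \<le> inner x (B *v x)"
    and "norm u = 1" and "inner u (A *v u) = a" and "norm v = 1" and "inner v (A *v v) = - b"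
  shows "\<exists>\<Phi> :: complex^'n^'n \<Rightarrow> complex^'k^'k.
           herm_linear \<Phi> \<and> positive_map \<Phi> \<and> unital_map \<Phi> \<and> \<Phi> A = B"
proof -
  define P where "P = (1 / (a + b)) *\<^sub>R (B + b *\<^sub>R mat 1)"
  have "(a / (a + b)) *\<^sub>R mat 1 + (b / (a + b)) *\<^sub>R mat 1 = (mat 1 :: complex^'k^'k)"
    using assms(2,3) by (simp add: add_divide_distrib[symmetric] flip: scaleR_add_left)
  then have "mat 1 - P = (1 / (a + b)) *\<^sub>R (- B + a *\<^sub>R mat 1)"
    by (simp add: P_def algebra_simps)
  moreover have "psd (- B + a *\<^sub>R mat 1)"
    using assms(4) by (intro psd_add_scaleR_mat_1 hermitian_uminus assms(1))
      (simp add: uminus_matrix_vector_mult)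
  moreover have "psd (B + b *\<^sub>R mat 1)"
    using assms(5) by (intro psd_add_scaleR_mat_1 assms(1))
  ultimately have "psd P" and "psd (mat 1 - P)"
    using assms(2,3) by (simp_all add: P_def psd_scaleR)
  then have "herm_linear (measure_prepare u v P)" and "positive_map (measure_prepare u v P)"
    by (simp_all add: psd_def herm_linear_measure_prepare positive_map_measure_prepare)
  moreover have "measure_prepare u v P A = B"
  proof -
    have "measure_prepare u v P A = (a + b) *\<^sub>R P - b *\<^sub>R mat 1"
      using assms(7,9) by (simp add: measure_prepare_def algebra_simps)
    then show ?thesis
      using assms(2,3) by (simp add: P_def)
  qed
  ultimately show ?thesis
    using unital_map_measure_prepare[OF assms(6,8)] by blast
qed

theorem mainTheorem11:
  fixes A :: "complex^'n^'n" and B :: "complex^'k^'k"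
  assumes "hermitian A" and "hermitian B"
    and "\<not> psd A" and "\<not> psd (- A)"
    and "\<not> psd B" and "\<not> psd (- B)"
    and "opnorm (pos_part A) \<ge> opnorm (pos_part B)"
    and "opnorm (neg_part A) \<ge> opnorm (neg_part B)"
  shows "\<exists>\<Phi> :: complex^'n^'n \<Rightarrow> complex^'k^'k.
           herm_linear \<Phi> \<and> positive_map \<Phi> \<and> unital_map \<Phi> \<and> \<Phi> A = B"
proof -
  obtain u where "norm u = 1" and "inner u (A *v u) = opnorm (pos_part A)"
    and "0 < opnorm (pos_part A)"
    using pos_part_opnorm_attained[OF assms(1,4)] by metis
  moreover obtain v where "norm v = 1" and "inner v (A *v v) = - opnorm (neg_part A)"
    and "0 < opnorm (neg_part A)"
    using neg_part_opnorm_attained[OF assms(1,3)] by metis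
  moreover have "inner x (B *v x) \<le> opnorm (pos_part A) * (norm x)\<^sup>2" for x
    using inner_le_opnorm_pos_part[OF assms(2), of x] assms(7)
    by (smt (verit) mult_right_mono zero_le_power2)
  moreover have "- (opnorm (neg_part A) * (norm x)\<^sup>2) \<le> inner x (B *v x)" for x
    using opnorm_neg_part_le_inner[OF assms(2), of x] assms(8)
    by (smt (verit) mult_right_mono zero_le_power2)
  ultimately show ?thesis
    using positive_unital_map_exists[OF assms(2)] by blast
qed

end
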